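(* For $a,b,c\in(0,1]$, \[\min\{a,b\}=\min_{x,y\in\mathbb{R}_+}\ ax+by\quad\text{subject to}\quad x^2+y^2-2cxy=1.\]
   Context: $\mathbb{R}_+$ denotes the nonnegative reals. *)

theory Defs
  imports "HOL-Analysis.Analysis"
begin

end

theory Submission
  imports Defs
begin

lemma sum_ge_one_if_quadric_eq_one:
  fixes x y c :: real
  assumes "0 \<le> x" "0 \<le> y" "-1 \<le> c" "x\<^sup>2 + y\<^sup>2 - 2 * c * x * y = 1"
  shows "1 \<le> x + y"
proof -
  have "(x + y)\<^sup>2 = 1 + 2 * (1 + c) * (x * y)"
    using assms(4) by (simp add: power2_sum algebra_simps)
  also have "\<dots> \<ge> 1"
    using assms(1-3) by (simp add: mult_nonneg_nonneg)
  finally have "1\<^sup>2 \<le> (x + y)\<^sup>2" by simp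
  then show ?thesis
    by (rule power2_le_imp_le) (use assms(1,2) in simp)
qed

lemma min_mult_sum_le:
  fixes a b x y :: real
  assumes "0 \<le> x" "0 \<le> y"
  shows "min a b * (x + y) \<le> a * x + b * y"
proof -
  have "min a b * x \<le> a * x" "min a b * y \<le> b * y"
    using assms by (simp_all add: mult_right_mono)
  then show ?thesis by (simp add: distrib_left)
qed

theorem lemma3:
  fixes a b c :: real
  assumes "0 < a" "a \<le> 1" "0 < b" "b \<le> 1" "0 < c" "c \<le> 1"
  shows "(\<exists>x y. x \<ge> 0 \<and> y \<ge> 0 \<and> x\<^sup>2 + y\<^sup>2 - 2 * c * x * y = 1 \<and> a * x + b * y = min a b) \<and>
         (\<forall>x y. x \<ge> 0 \<and> y \<ge> 0 \<and> x\<^sup>2 + y\<^sup>2 - 2 * c * x * y = 1 \<longrightarrow> min a b \<le> a * x + b * y)"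
proof (intro conjI allI impI)
  show "\<exists>x y. x \<ge> 0 \<and> y \<ge> 0 \<and> x\<^sup>2 + y\<^sup>2 - 2 * c * x * y = 1 \<and> a * x + b * y = min a b"
  proof (cases "a \<le> b")
    case True
    then show ?thesis by (intro exI[of _ 1] exI[of _ 0]) simp
  next
    case False
    then show ?thesis by (intro exI[of _ 0] exI[of _ 1]) simp
  qed
next
  fix x y :: real
  assume "x \<ge> 0 \<and> y \<ge> 0 \<and> x\<^sup>2 + y\<^sup>2 - 2 * c * x * y = 1"
  then have "0 \<le> x" "0 \<le> y" and "1 \<le> x + y"
    using sum_ge_one_if_quadric_eq_one[of x y c] assms(5) by auto
  have "min a b \<le> min a b * (x + y)"
    using \<open>1 \<le> x + y\<close> assms(1,3) by (simp add: mult_le_cancel_left1)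
  also have "\<dots> \<le> a * x + b * y"
    using \<open>0 \<le> x\<close> \<open>0 \<le> y\<close> by (rule min_mult_sum_le)
  finally show "min a b \<le> a * x + b * y" .
qed

end
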